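(* Let $d \geq 2$ be an integer and let $Z, U$ be independent random variables with $Z \sim N(0,1)$ and $U \sim \chi^2_d$ (chi-squared with $d$ degrees of freedom). Then for all $\delta > 0$, $p > 0$ and all integers $k \geq 1$, $$\frac{1}{2}\, \mathbb{P}\left( \tfrac{1}{4} Z^2 \geq U \geq \delta^2 \right) k^{-d/p} \;\leq\; \mathbb{P}\left( \delta + \sqrt{U}\sqrt{k^{2/p} - 1} < Z \right) \;\leq\; \frac{ e^{-(1+\delta^2)/2}\, p }{ 2\delta^2 \sqrt{d} } \cdot \frac{ k^{(1-d)/p} }{ \ln k },$$ where for $k=1$ the right-hand side is interpreted as $+\infty$. *)

theory Defs
  imports "HOL-Probability.Probability"
begin

definition chi_squared_density :: "nat \<Rightarrow> real \<Rightarrow> real" where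
  "chi_squared_density d u =
     (if u > 0 then u powr (real d / 2 - 1) * exp (- u / 2) / (2 powr (real d / 2) * Gamma (real d / 2))
      else 0)"

end

theory Submission
  imports Defs
begin

text \<open>Conditionally on \<open>U\<close>, the event \<open>\<delta> + c \<surd>U < Z\<close> with \<open>c = \<surd>(k\<^bsup>2/p\<^esup> - 1)\<close> has
  probability \<open>\<Phi>\<^sup>c(\<delta> + c \<surd>U)\<close>, the standard normal tail, so both bounds are one-dimensional
  integrals against the \<open>\<chi>\<^sup>2\<^sub>d\<close> density.
  For the lower bound, substituting \<open>u = v / (1 + c\<^sup>2)\<close> costs at most the factor
  \<open>(1 + c\<^sup>2)\<^bsup>-d/2\<^esup> = k\<^bsup>-d/p\<^esup>\<close> in the density and lowers the threshold to \<open>\<delta> + \<surd>v\<close>;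
  by symmetry of \<open>Z\<close>, \<open>P(Z\<^sup>2/4 \<ge> U \<ge> \<delta>\<^sup>2)\<close> is at most \<open>2 P(\<delta> + \<surd>U < Z)\<close>.
  For the upper bound, Mills' ratio \<open>\<Phi>\<^sup>c(x) \<le> \<phi>(x)/x\<close> and \<open>e\<^sup>-\<^sup>y \<le> 1/(e y)\<close> applied to the
  cross term \<open>\<delta> c \<surd>u\<close> of the Gaussian exponent leave a Gamma integral; the ratio
  \<open>\<Gamma>((d-1)/2) / \<Gamma>(d/2)\<close> is controlled by log-convexity of \<open>\<Gamma>\<close>, and \<open>ln k \<le> p c\<close>.\<close>

definition std_normal_tail :: "real \<Rightarrow> ennreal" where
  "std_normal_tail a = (\<integral>\<^sup>+z\<in>{a<..}. ennreal (std_normal_density z) \<partial>lborel)"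

lemma std_normal_tail_measurable [measurable]: "std_normal_tail \<in> borel_measurable borel"
proof -
  have "std_normal_tail = (\<lambda>a. \<integral>\<^sup>+z. ennreal (std_normal_density z) * (if a < z then 1 else 0) \<partial>lborel)"
    unfolding std_normal_tail_def by (intro ext nn_integral_cong) (auto simp: indicator_def)
  also have "\<dots> \<in> borel_measurable borel" by measurable
  finally show ?thesis .
qed

lemma std_normal_tail_antimono: "a \<le> b \<Longrightarrow> std_normal_tail b \<le> std_normal_tail a"
  unfolding std_normal_tail_def by (intro nn_integral_mono) (auto simp: indicator_def)

lemma std_normal_tail_reflect:
  "(\<integral>\<^sup>+z\<in>{z. a < - z}. ennreal (std_normal_density z) \<partial>lborel) = std_normal_tail a"
proof -
  have "(\<integral>\<^sup>+z\<in>{z. a < - z}. ennreal (std_normal_density z) \<partial>lborel)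
      = ennreal \<bar>- 1\<bar> * (\<integral>\<^sup>+z. ennreal (std_normal_density (0 + (- 1) * z))
            * indicator {z. a < - z} (0 + (- 1) * z) \<partial>lborel)"
    by (rule nn_integral_real_affine) auto
  also have "\<dots> = std_normal_tail a"
    by (simp add: std_normal_tail_def std_normal_density_def indicator_def)
  finally show ?thesis .
qed

text \<open>Mills' ratio bound: on \<open>z > a\<close> the density is at most \<open>z/a\<close> times itself, and \<open>z\<close> times
  the density has antiderivative \<open>- std_normal_density\<close>.\<close>
lemma std_normal_tail_le_density_div:
  assumes a: "a > 0"
  shows "std_normal_tail a \<le> ennreal (std_normal_density a / a)"
proof -
  let ?N = "std_normal_density"
  have "std_normal_tail a \<le> (\<integral>\<^sup>+z. ennreal (1/a) * (ennreal (z * ?N z) * indicator {a..} z) \<partial>lborel)"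
    unfolding std_normal_tail_def
  proof (intro nn_integral_mono)
    fix z :: real
    show "ennreal (?N z) * indicator {a<..} z \<le> ennreal (1/a) * (ennreal (z * ?N z) * indicator {a..} z)"
    proof (cases "a < z")
      case True
      have "?N z \<le> 1/a * (z * ?N z)"
        using True a normal_density_nonneg[of 0 1 z] by (simp add: field_simps mult_right_mono)
      then show ?thesis
        using True a normal_density_nonneg[of 0 1 z]
        by (auto simp: indicator_def ennreal_mult[symmetric] intro: ennreal_leI)
    qed simp
  qed
  also have "\<dots> = ennreal (1/a) * (\<integral>\<^sup>+z. ennreal (z * ?N z) * indicator {a..} z \<partial>lborel)"
    by (rule nn_integral_cmult) measurable
  also have "(\<integral>\<^sup>+z. ennreal (z * ?N z) * indicator {a..} z \<partial>lborel) = ennreal (0 - (- ?N a))"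
  proof (rule nn_integral_FTC_atLeast)
    have "LIM x at_top. (x::real)\<^sup>2 * (1/2) :> at_top"
      by (rule filterlim_at_top_mult_tendsto_pos[OF tendsto_const])
        (auto intro: filterlim_pow_at_top filterlim_ident)
    then have "((\<lambda>x::real. exp (- (x\<^sup>2 * (1/2)))) \<longlongrightarrow> 0) at_top"
      by (rule filterlim_compose[OF exp_at_bot filterlim_compose[OF filterlim_uminus_at_bot_at_top]])
    then have "((\<lambda>x. - (1 / sqrt (2 * pi) * exp (- (x\<^sup>2 * (1/2))))) \<longlongrightarrow> - (1 / sqrt (2 * pi) * 0)) at_top"
      by (intro tendsto_minus tendsto_mult tendsto_const)
    then show "((\<lambda>x. - ?N x) \<longlongrightarrow> 0) at_top"
      by (simp add: std_normal_density_def)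
    fix x :: real assume "a \<le> x"
    then show "0 \<le> x * ?N x" using a normal_density_nonneg[of 0 1 x] by simp
    show "((\<lambda>x. - ?N x) has_real_derivative x * ?N x) (at x)"
      unfolding std_normal_density_def by (auto intro!: derivative_eq_intros simp: field_simps)
  qed measurable
  also have "ennreal (1/a) * ennreal (0 - (- ?N a)) = ennreal (?N a / a)"
    using a normal_density_nonneg[of 0 1 a] by (simp add: ennreal_mult[symmetric])
  finally show ?thesis .
qed

text \<open>For \<open>u > \<delta>\<^sup>2\<close>, \<open>z\<^sup>2 \<ge> 4u\<close> forces \<open>|z| \<ge> 2\<surd>u > \<delta> + \<surd>u\<close>; both tails have the same mass.\<close>
lemma std_normal_band_le_twice_tail:
  fixes \<delta> u :: real
  assumes \<delta>: "\<delta> > 0" and u: "u \<noteq> \<delta>\<^sup>2"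
  shows "(\<integral>\<^sup>+z\<in>{z. z\<^sup>2 / 4 \<ge> u \<and> u \<ge> \<delta>\<^sup>2}. ennreal (std_normal_density z) \<partial>lborel)
         \<le> 2 * std_normal_tail (\<delta> + sqrt u)"
proof (cases "u < \<delta>\<^sup>2")
  case True
  then show ?thesis by (simp add: indicator_def)
next
  case False
  with u have "\<delta>\<^sup>2 < u" by simp
  then have "\<delta> < sqrt u"
    using real_sqrt_less_mono \<delta> by fastforce
  have "{z. z\<^sup>2 / 4 \<ge> u \<and> u \<ge> \<delta>\<^sup>2} \<subseteq> {\<delta> + sqrt u<..} \<union> {z. \<delta> + sqrt u < - z}"
  proof
    fix z
    assume "z \<in> {z. z\<^sup>2 / 4 \<ge> u \<and> u \<ge> \<delta>\<^sup>2}"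
    then have "sqrt (4 * u) \<le> sqrt (z\<^sup>2)" by (intro real_sqrt_le_mono) simp
    then have "2 * sqrt u \<le> \<bar>z\<bar>" by (simp add: real_sqrt_mult)
    with \<open>\<delta> < sqrt u\<close> show "z \<in> {\<delta> + sqrt u<..} \<union> {z. \<delta> + sqrt u < - z}" by auto
  qed
  then have "(\<integral>\<^sup>+z\<in>{z. z\<^sup>2 / 4 \<ge> u \<and> u \<ge> \<delta>\<^sup>2}. ennreal (std_normal_density z) \<partial>lborel)
      \<le> (\<integral>\<^sup>+z. ennreal (std_normal_density z) * indicator {\<delta> + sqrt u<..} z
           + ennreal (std_normal_density z) * indicator {z. \<delta> + sqrt u < - z} z \<partial>lborel)"
    by (intro nn_integral_mono) (auto simp: indicator_def)
  also have "\<dots> = std_normal_tail (\<delta> + sqrt u) + std_normal_tail (\<delta> + sqrt u)"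
    by (subst nn_integral_add) (auto simp: std_normal_tail_def std_normal_tail_reflect)
  finally show ?thesis by (simp add: mult_2)
qed

lemma nn_integral_powr_exp_Gamma:
  fixes a b :: real
  assumes a: "a > 0" and b: "b > 0"
  shows "(\<integral>\<^sup>+u\<in>{0<..}. ennreal (u powr (a - 1) * exp (- (b * u))) \<partial>lborel)
         = ennreal (Gamma a / b powr a)"
proof -
  let ?f = "\<lambda>u::real. ennreal (u powr (a - 1) * exp (- (b * u))) * indicator {0<..} u"
  have "(\<integral>\<^sup>+u. ?f u \<partial>lborel) = \<bar>1/b\<bar> * (\<integral>\<^sup>+x. ?f (0 + 1/b * x) \<partial>lborel)"
    by (rule nn_integral_real_affine) (use b in auto)
  also have "(\<integral>\<^sup>+x. ?f (0 + 1/b * x) \<partial>lborel)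
      = (\<integral>\<^sup>+x. ennreal (b powr (1 - a)) * ennreal (indicator {0..} x * x powr (a - 1) / exp x) \<partial>lborel)"
  proof (intro nn_integral_cong)
    fix x :: real
    show "?f (0 + 1/b * x) = ennreal (b powr (1 - a)) * ennreal (indicator {0..} x * x powr (a - 1) / exp x)"
    proof (cases "x > 0")
      case True
      have "(x / b) powr (a - 1) = b powr (1 - a) * x powr (a - 1)"
        using True b by (simp add: powr_divide powr_diff field_simps)
      then show ?thesis using True b
        by (simp add: ennreal_mult[symmetric] exp_minus field_simps)
    next
      case False
      then show ?thesis using b
        by (cases "x = 0") (auto simp: indicator_def zero_less_mult_iff zero_less_divide_iff)
    qed
  qed
  also have "\<dots> = ennreal (b powr (1 - a)) * (\<integral>\<^sup>+x. ennreal (indicator {0..} x * x powr (a - 1) / exp x) \<partial>lborel)"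
    by (rule nn_integral_cmult) measurable
  also have "(\<integral>\<^sup>+x. ennreal (indicator {0..} x * x powr (a - 1) / exp x) \<partial>lborel) = ennreal (Gamma a)"
    using Gamma_conv_nn_integral_real[OF a] by simp
  also have "ennreal \<bar>1/b\<bar> * (ennreal (b powr (1 - a)) * ennreal (Gamma a))
      = ennreal (1/b * (b powr (1 - a) * Gamma a))"
    using b a by (simp add: ennreal_mult[symmetric] Gamma_real_pos less_imp_le)
  also have "1/b * (b powr (1 - a) * Gamma a) = Gamma a / b powr a"
    using b by (simp add: powr_diff field_simps)
  finally show ?thesis .
qed

text \<open>Log-convexity gives \<open>\<Gamma>(a + 1/2)\<^sup>2 \<le> \<Gamma>(a) \<Gamma>(a + 1) = a \<Gamma>(a)\<^sup>2\<close>; and \<open>a - 1/2 \<ge> a/2\<close>.\<close>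
lemma Gamma_minus_half_mult_sqrt_le:
  fixes a :: real
  assumes a: "a \<ge> 1"
  shows "Gamma (a - 1/2) * sqrt a \<le> 2 * Gamma a"
proof -
  have Gamma_pos: "Gamma a > 0" "Gamma (a + 1) > 0" "Gamma (a + 1/2) > 0" "Gamma (a - 1/2) > 0"
    using a by (auto intro!: Gamma_real_pos)
  have "(ln \<circ> Gamma) ((1 - 1/2) *\<^sub>R a + (1/2) *\<^sub>R (a + 1))
      \<le> (1 - 1/2) * (ln \<circ> Gamma) a + 1/2 * (ln \<circ> Gamma) (a + 1)"
    by (rule convex_onD[OF log_convex_Gamma_real]) (use a in auto)
  moreover have "(1 - 1/2) *\<^sub>R a + (1/2) *\<^sub>R (a + 1) = a + 1/2" by (simp add: field_simps)
  ultimately have "2 * ln (Gamma (a + 1/2)) \<le> ln (Gamma a) + ln (Gamma (a + 1))"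
    by simp
  then have "ln (Gamma (a + 1/2) ^ 2) \<le> ln (Gamma a * Gamma (a + 1))"
    using Gamma_pos by (simp add: ln_mult ln_realpow)
  then have "Gamma (a + 1/2) ^ 2 \<le> Gamma a * Gamma (a + 1)"
    using Gamma_pos by simp
  also have "Gamma (a + 1) = a * Gamma a"
    using Gamma_plus1[of a] a nonpos_Ints_nonpos[of a] by force
  also have "Gamma (a + 1/2) = (a - 1/2) * Gamma (a - 1/2)"
    using Gamma_plus1[of "a - 1/2"] a nonpos_Ints_nonpos[of "a - 1/2"]
    by (force simp: algebra_simps)
  finally have shifted: "((a - 1/2) * Gamma (a - 1/2))\<^sup>2 \<le> a * Gamma a ^ 2"
    by (simp add: power2_eq_square ac_simps)
  have "a * (a * Gamma (a - 1/2) ^ 2) = 4 * (a/2 * Gamma (a - 1/2))\<^sup>2"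
    by (simp add: power2_eq_square)
  also have "\<dots> \<le> 4 * ((a - 1/2) * Gamma (a - 1/2))\<^sup>2"
    using a Gamma_pos by (intro mult_left_mono power_mono mult_right_mono) auto
  also have "\<dots> \<le> a * (4 * Gamma a ^ 2)"
    using shifted by simp
  finally have "a * Gamma (a - 1/2) ^ 2 \<le> 4 * Gamma a ^ 2"
    using a by simp
  then have "(Gamma (a - 1/2) * sqrt a)\<^sup>2 \<le> (2 * Gamma a)\<^sup>2"
    using a by (simp add: power_mult_distrib mult.commute[of "Gamma (a - 1/2) ^ 2"])
  then show ?thesis
    by (rule power2_le_imp_le) (use Gamma_pos in simp)
qed

lemma exp_minus_le_inverse:
  fixes y :: real
  assumes "y > 0"
  shows "exp (- y) \<le> 1 / (exp 1 * y)"
proof -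
  have "exp 1 * y \<le> exp 1 * exp (y - 1)"
    using exp_ge_add_one_self[of "y - 1"] by simp
  also have "\<dots> = exp y" by (simp add: exp_add[symmetric])
  finally show ?thesis
    using assms by (simp add: exp_minus field_simps)
qed

lemma ln_one_plus_square_le:
  fixes x :: real
  assumes "x \<ge> 0"
  shows "ln (1 + x\<^sup>2) \<le> 2 * x"
proof -
  have "ln (1 + x\<^sup>2) \<le> ln ((1 + x)\<^sup>2)"
    using assms by (subst ln_le_cancel_iff) (auto simp: power2_eq_square algebra_simps add_pos_nonneg)
  also have "\<dots> = 2 * ln (1 + x)" using assms by (simp add: ln_realpow)
  also have "\<dots> \<le> 2 * x" using ln_add_one_self_le_self[OF assms] by simp
  finally show ?thesis .
qed

lemma ln_le_mult_sqrt_powr_minus_one: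
  fixes x p :: real
  assumes x: "x \<ge> 1" and p: "p > 0"
  shows "ln x \<le> p * sqrt (x powr (2 / p) - 1)"
proof -
  define c where "c = sqrt (x powr (2 / p) - 1)"
  have "x powr (2 / p) \<ge> 1" using x p by (intro ge_one_powr_ge_zero) auto
  then have "1 + c\<^sup>2 = x powr (2 / p)" and c: "c \<ge> 0" by (simp_all add: c_def)
  then have "2 / p * ln x = ln (1 + c\<^sup>2)" using x by (simp add: ln_powr)
  also have "\<dots> \<le> 2 * c" by (rule ln_one_plus_square_le[OF c])
  finally show ?thesis using p by (simp add: c_def field_simps)
qed

lemma two_sqrt_two_le_sqrt_pi_mult_exp_half: "2 * sqrt 2 \<le> sqrt pi * exp (1/2 :: real)"
proof (rule power2_le_imp_le)
  have "exp (1::real) \<ge> 8/3"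
    using e_approx_32 abs_ge_minus_self[of "exp 1 - 5837465777 / 2147483648 :: real"] by simp
  then have "3 * (8/3) \<le> pi * exp (1::real)"
    using pi_gt3 by (intro mult_mono) auto
  moreover have "(sqrt pi * exp (1/2 :: real))\<^sup>2 = pi * exp 1"
    by (simp add: power_mult_distrib exp_double[symmetric] power2_eq_square[of "exp _"])
  ultimately show "(2 * sqrt 2)\<^sup>2 \<le> (sqrt pi * exp (1/2 :: real))\<^sup>2"
    by (simp add: power_mult_distrib)
qed simp

lemma Gamma_half_pred_mult_sqrt_le:
  assumes d: "d \<ge> 2"
  shows "Gamma ((real d - 1) / 2) * sqrt (real d) \<le> sqrt pi * exp (1/2) * Gamma (real d / 2)"
proof -
  have sqrt_d: "sqrt (real d) = sqrt 2 * sqrt (real d / 2)"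
    by (simp flip: real_sqrt_mult)
  have shift: "(real d - 1) / 2 = real d / 2 - 1/2" by (simp add: field_simps)
  have "Gamma ((real d - 1) / 2) * sqrt (real d) = sqrt 2 * (Gamma (real d / 2 - 1/2) * sqrt (real d / 2))"
    unfolding shift sqrt_d by (simp only: mult_ac)
  also have "\<dots> \<le> sqrt 2 * (2 * Gamma (real d / 2))"
    using d by (intro mult_left_mono Gamma_minus_half_mult_sqrt_le) auto
  also have "\<dots> \<le> sqrt pi * exp (1/2) * Gamma (real d / 2)"
    using d two_sqrt_two_le_sqrt_pi_mult_exp_half by (simp add: mult_right_mono)
  finally show ?thesis .
qed

text \<open>With \<open>x = \<delta> + c \<surd>u\<close>: \<open>1/x \<le> 1/\<delta>\<close>, and the cross term \<open>exp (- \<delta> c \<surd>u)\<close> of the Gaussian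
  is traded for the factor \<open>1/(e \<delta> c \<surd>u)\<close>.\<close>
lemma std_normal_density_shift_div_le:
  fixes u \<delta> c :: real
  assumes u: "u > 0" and \<delta>: "\<delta> > 0" and c: "c > 0"
  shows "std_normal_density (\<delta> + sqrt u * c) / (\<delta> + sqrt u * c)
         \<le> exp (- \<delta>\<^sup>2 / 2) / (sqrt (2 * pi) * exp 1 * \<delta>\<^sup>2 * c)
            * (u powr (- 1/2) * exp (- (c\<^sup>2 * u / 2)))"
proof -
  define y where "y = sqrt u"
  have y: "y > 0" and u_eq: "u = y\<^sup>2" using u by (auto simp: y_def)
  define x where "x = \<delta> + y * c"
  have x: "x \<ge> \<delta>" using y c by (simp add: x_def)
  have "- (x\<^sup>2) / 2 = - \<delta>\<^sup>2 / 2 + - (\<delta> * c * y) + - (c\<^sup>2 * u / 2)"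
    unfolding x_def u_eq by (simp add: power2_eq_square field_simps)
  then have N_eq: "std_normal_density x
      = exp (- \<delta>\<^sup>2 / 2) * exp (- (\<delta> * c * y)) * exp (- (c\<^sup>2 * u / 2)) / sqrt (2 * pi)"
    unfolding std_normal_density_def by (simp add: exp_add[symmetric])
  have "std_normal_density x / x \<le> std_normal_density x / \<delta>"
    using x \<delta> normal_density_nonneg[of 0 1 x] by (intro divide_left_mono) auto
  also have "\<dots> \<le> exp (- \<delta>\<^sup>2 / 2) * (1 / (exp 1 * (\<delta> * c * y))) * exp (- (c\<^sup>2 * u / 2)) / sqrt (2 * pi) / \<delta>"
    unfolding N_eq using \<delta> c y
    by (intro divide_right_mono mult_right_mono mult_left_mono exp_minus_le_inverse) auto
  also have "\<dots> = exp (- \<delta>\<^sup>2 / 2) / (sqrt (2 * pi) * exp 1 * \<delta>\<^sup>2 * c) * (1 / y * exp (- (c\<^sup>2 * u / 2)))"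
    using \<delta> c y by (simp add: field_simps power2_eq_square)
  also have "1 / y = u powr (- 1/2)"
    using u by (simp add: y_def powr_minus_divide powr_half_sqrt)
  finally show ?thesis by (simp add: x_def y_def)
qed

lemma chi_squared_normalizer_nonneg: "2 powr (real d / 2) * Gamma (real d / 2) \<ge> 0"
  by (cases "d = 0") auto

lemma chi_squared_density_nonneg: "chi_squared_density d u \<ge> 0"
  using chi_squared_normalizer_nonneg[of d] by (simp add: chi_squared_density_def)

lemma borel_measurable_chi_squared_density [measurable]:
  "chi_squared_density d \<in> borel_measurable borel"
  unfolding chi_squared_density_def by measurable

lemma chi_squared_density_scale_ge:
  fixes s v :: real
  assumes s: "0 < s" "s \<le> 1"
  shows "s powr (real d / 2) * chi_squared_density d v \<le> s * chi_squared_density d (s * v)"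
proof (cases "v > 0")
  case True
  have "s * s powr (real d / 2 - 1) = s powr (real d / 2)"
    using s powr_add[of s 1 "real d / 2 - 1"] by simp
  then have "s * (s * v) powr (real d / 2 - 1) = s powr (real d / 2) * v powr (real d / 2 - 1)"
    using s True by (simp add: powr_mult mult.assoc[symmetric])
  moreover have "exp (- v / 2) \<le> exp (- (s * v) / 2)"
    using s True by (simp add: mult_left_le_one_le)
  ultimately show ?thesis
    using s True chi_squared_normalizer_nonneg[of d]
    by (simp add: chi_squared_density_def mult.assoc[symmetric] divide_right_mono mult_left_mono)
qed (use s in \<open>simp add: chi_squared_density_def zero_less_mult_iff\<close>)

lemma chi_squared_density_mult_tail_scale_le:
  fixes s c v :: real
  assumes s: "0 < s" "s \<le> 1" and sc: "sqrt s * c \<le> 1"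
  shows "ennreal (s powr (real d / 2)) * (ennreal (chi_squared_density d v) * std_normal_tail (\<delta> + sqrt v))
    \<le> ennreal s * (ennreal (chi_squared_density d (s * v)) * std_normal_tail (\<delta> + sqrt (s * v) * c))"
proof (cases "v > 0")
  case True
  have "sqrt (s * v) * c = sqrt v * (sqrt s * c)" by (simp add: real_sqrt_mult)
  also have "\<dots> \<le> sqrt v * 1" using sc True by (intro mult_left_mono) auto
  finally have "std_normal_tail (\<delta> + sqrt v) \<le> std_normal_tail (\<delta> + sqrt (s * v) * c)"
    by (intro std_normal_tail_antimono) simp
  moreover have "ennreal (s powr (real d / 2) * chi_squared_density d v)
      \<le> ennreal (s * chi_squared_density d (s * v))"
    using chi_squared_density_scale_ge[OF s] by (rule ennreal_leI)
  ultimately show ?thesis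
    using s chi_squared_density_nonneg
    by (simp add: mult.assoc[symmetric] ennreal_mult[symmetric] mult_mono)
qed (simp add: chi_squared_density_def)

lemma chi_squared_density_mult_tail_le:
  assumes \<delta>: "\<delta> > 0" and c: "c > 0"
  shows "ennreal (chi_squared_density d u) * std_normal_tail (\<delta> + sqrt u * c)
    \<le> ennreal (exp (- \<delta>\<^sup>2 / 2) / (sqrt (2 * pi) * exp 1 * \<delta>\<^sup>2 * c))
      * ennreal (chi_squared_density d u * (u powr (- 1/2) * exp (- (c\<^sup>2 * u / 2))))"
proof (cases "u > 0")
  case True
  define C where "C = exp (- \<delta>\<^sup>2 / 2) / (sqrt (2 * pi) * exp 1 * \<delta>\<^sup>2 * c)"
  have "std_normal_tail (\<delta> + sqrt u * c) \<le> ennreal (std_normal_density (\<delta> + sqrt u * c) / (\<delta> + sqrt u * c))"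
    using True \<delta> c by (intro std_normal_tail_le_density_div add_pos_nonneg) auto
  also have "\<dots> \<le> ennreal (C * (u powr (- 1/2) * exp (- (c\<^sup>2 * u / 2))))"
    unfolding C_def by (intro ennreal_leI std_normal_density_shift_div_le True \<delta> c)
  finally have "ennreal (chi_squared_density d u) * std_normal_tail (\<delta> + sqrt u * c)
      \<le> ennreal (chi_squared_density d u) * ennreal (C * (u powr (- 1/2) * exp (- (c\<^sup>2 * u / 2))))"
    by (rule mult_left_mono) simp
  also have "\<dots> = ennreal C * ennreal (chi_squared_density d u * (u powr (- 1/2) * exp (- (c\<^sup>2 * u / 2))))"
    using \<delta> c chi_squared_density_nonneg[of d u] by (simp add: C_def ennreal_mult[symmetric] mult_ac)
  finally show ?thesis by (simp only: C_def)
qed (simp add: chi_squared_density_def)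

lemma nn_integral_chi_squared_density_inv_sqrt_exp:
  fixes c :: real
  assumes d: "d \<ge> 2"
  shows "(\<integral>\<^sup>+u. ennreal (chi_squared_density d u * (u powr (- 1/2) * exp (- (c\<^sup>2 * u / 2)))) \<partial>lborel)
         = ennreal (Gamma ((real d - 1) / 2) / (sqrt 2 * Gamma (real d / 2) * (1 + c\<^sup>2) powr ((real d - 1) / 2)))"
proof -
  define K where "K = 2 powr (real d / 2) * Gamma (real d / 2)"
  define a where "a = (real d - 1) / 2"
  define b where "b = (1 + c\<^sup>2) / 2"
  have a: "a > 0" using d by (simp add: a_def)
  have b: "b > 0" by (simp add: b_def add_pos_nonneg)
  have K: "K > 0" using d by (simp add: K_def)
  have integrand_eq: "ennreal (chi_squared_density d u * (u powr (- 1/2) * exp (- (c\<^sup>2 * u / 2))))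
      = ennreal (1 / K) * (ennreal (u powr (a - 1) * exp (- (b * u))) * indicator {0<..} u)" for u
  proof (cases "u > 0")
    case True
    have "real d / 2 - 1 + - 1/2 = a - 1" by (simp add: a_def field_simps)
    then have powr_eq: "u powr (real d / 2 - 1) * u powr (- 1/2) = u powr (a - 1)"
      by (metis powr_add)
    have exp_eq: "exp (- u / 2) * exp (- (c\<^sup>2 * u / 2)) = exp (- (b * u))"
      by (simp add: exp_add[symmetric] b_def field_simps)
    have "chi_squared_density d u * (u powr (- 1/2) * exp (- (c\<^sup>2 * u / 2)))
        = 1 / K * ((u powr (real d / 2 - 1) * u powr (- 1/2)) * (exp (- u / 2) * exp (- (c\<^sup>2 * u / 2))))"
      using True K unfolding chi_squared_density_def K_def[symmetric]
      by (simp add: field_simps)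
    also have "\<dots> = 1 / K * (u powr (a - 1) * exp (- (b * u)))"
      by (simp only: powr_eq exp_eq)
    finally show ?thesis
      using True K by (simp add: ennreal_mult[symmetric])
  qed (simp add: chi_squared_density_def)
  have "(\<integral>\<^sup>+u. ennreal (chi_squared_density d u * (u powr (- 1/2) * exp (- (c\<^sup>2 * u / 2)))) \<partial>lborel)
      = ennreal (1 / K) * ennreal (Gamma a / b powr a)"
    unfolding integrand_eq
    by (subst nn_integral_cmult) (auto simp: nn_integral_powr_exp_Gamma[OF a b])
  also have "\<dots> = ennreal (Gamma a / (K * b powr a))"
    using K b Gamma_real_pos[OF a] by (simp add: ennreal_mult[symmetric])
  also have "K * b powr a = sqrt 2 * Gamma (real d / 2) * (1 + c\<^sup>2) powr a"
  proof -
    have "(2::real) powr (real d / 2) = 2 powr a * 2 powr (1/2)"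
      by (simp add: powr_add[symmetric] a_def field_simps)
    then show ?thesis
      by (simp add: K_def b_def powr_divide powr_half_sqrt)
  qed
  finally show ?thesis by (simp add: a_def)
qed

lemma emeasure_indep_pair_density:
  fixes Z U :: "'a \<Rightarrow> real"
  assumes "prob_space M"
    and Z: "distributed M lborel Z N" and U: "distributed M lborel U F"
    and indep: "prob_space.indep_var M borel Z borel U"
    and P [measurable]: "Measurable.pred (borel \<Otimes>\<^sub>M borel) P"
  shows "emeasure M {\<omega> \<in> space M. P (Z \<omega>, U \<omega>)}
    = (\<integral>\<^sup>+u. ennreal (F u) * (\<integral>\<^sup>+z\<in>{z. P (z, u)}. ennreal (N z) \<partial>lborel) \<partial>lborel)"
proof -
  interpret prob_space M by fact
  have [measurable]: "(\<lambda>z. ennreal (N z)) \<in> borel_measurable borel" "(\<lambda>u. ennreal (F u)) \<in> borel_measurable borel"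
    using distributed_borel_measurable[OF Z] distributed_borel_measurable[OF U] by auto
  have "indep_var lborel Z lborel U"
    using indep by (simp add: indep_var_eq)
  then have joint: "distributed M (lborel \<Otimes>\<^sub>M lborel) (\<lambda>\<omega>. (Z \<omega>, U \<omega>)) (\<lambda>(z, u). ennreal (N z) * ennreal (F u))"
    by (intro distributed_joint_indep[OF _ _ Z U]) (auto intro: lborel.sigma_finite_measure_axioms)
  have sets_eq: "sets (lborel \<Otimes>\<^sub>M lborel) = sets (borel \<Otimes>\<^sub>M borel :: (real \<times> real) measure)"
    by (rule sets_pair_measure_cong) simp_all
  have A: "{x. P x} \<in> sets (lborel \<Otimes>\<^sub>M lborel)"
  proof -
    have "{x \<in> space (borel \<Otimes>\<^sub>M borel). P x} \<in> sets (borel \<Otimes>\<^sub>M borel)" by measurable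
    then show ?thesis by (simp add: sets_eq space_pair_measure)
  qed
  have "{\<omega> \<in> space M. P (Z \<omega>, U \<omega>)} = (\<lambda>\<omega>. (Z \<omega>, U \<omega>)) -` {x. P x} \<inter> space M" by auto
  also have "emeasure M \<dots>
      = (\<integral>\<^sup>+x. (\<lambda>(z, u). ennreal (N z) * ennreal (F u)) x * indicator {x. P x} x \<partial>(lborel \<Otimes>\<^sub>M lborel))"
    by (rule distributed_emeasure[OF joint A])
  also have "\<dots> = (\<integral>\<^sup>+u. \<integral>\<^sup>+z. ennreal (N z) * ennreal (F u) * indicator {x. P x} (z, u) \<partial>lborel \<partial>lborel)"
    by (subst lborel_pair.nn_integral_snd[symmetric]) (use A in \<open>auto simp: sets_eq\<close>)
  also have "\<dots> = (\<integral>\<^sup>+u. ennreal (F u) * (\<integral>\<^sup>+z\<in>{z. P (z, u)}. ennreal (N z) \<partial>lborel) \<partial>lborel)"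
    by (intro nn_integral_cong, subst nn_integral_cmult[symmetric])
      (auto intro!: nn_integral_cong simp: indicator_def mult.commute)
  finally show ?thesis .
qed

locale indep_normal_chi_squared = prob_space M for M :: "'a measure" +
  fixes Z U :: "'a \<Rightarrow> real" and d :: nat
  assumes Z_distributed: "distributed M lborel Z std_normal_density"
    and U_distributed: "distributed M lborel U (chi_squared_density d)"
    and indep_Z_U: "indep_var borel Z borel U"
begin

lemma emeasure_pair_eq_nn_integral:
  assumes "Measurable.pred (borel \<Otimes>\<^sub>M borel) P"
  shows "emeasure M {\<omega> \<in> space M. P (Z \<omega>, U \<omega>)} = (\<integral>\<^sup>+u. ennreal (chi_squared_density d u)
      * (\<integral>\<^sup>+z\<in>{z. P (z, u)}. ennreal (std_normal_density z) \<partial>lborel) \<partial>lborel)"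
  by (rule emeasure_indep_pair_density[OF prob_space_axioms Z_distributed U_distributed indep_Z_U assms])

lemma emeasure_shifted_eq_nn_integral_tail:
  "emeasure M {\<omega> \<in> space M. \<delta> + sqrt (U \<omega>) * c < Z \<omega>}
    = (\<integral>\<^sup>+u. ennreal (chi_squared_density d u) * std_normal_tail (\<delta> + sqrt u * c) \<partial>lborel)"
  using emeasure_pair_eq_nn_integral[of "\<lambda>(z, u). \<delta> + sqrt u * c < z"]
  by (simp add: std_normal_tail_def greaterThan_def)

lemma measure_band_le:
  assumes \<delta>: "\<delta> > 0"
  shows "measure M {\<omega> \<in> space M. (Z \<omega>)\<^sup>2 / 4 \<ge> U \<omega> \<and> U \<omega> \<ge> \<delta>\<^sup>2}
         \<le> 2 * measure M {\<omega> \<in> space M. \<delta> + sqrt (U \<omega>) < Z \<omega>}"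
proof -
  have "emeasure M {\<omega> \<in> space M. (Z \<omega>)\<^sup>2 / 4 \<ge> U \<omega> \<and> U \<omega> \<ge> \<delta>\<^sup>2}
      = (\<integral>\<^sup>+u. ennreal (chi_squared_density d u)
          * (\<integral>\<^sup>+z\<in>{z. z\<^sup>2 / 4 \<ge> u \<and> u \<ge> \<delta>\<^sup>2}. ennreal (std_normal_density z) \<partial>lborel) \<partial>lborel)"
    using emeasure_pair_eq_nn_integral[of "\<lambda>(z, u). z\<^sup>2 / 4 \<ge> u \<and> u \<ge> \<delta>\<^sup>2"] by simp
  also have "\<dots> \<le> (\<integral>\<^sup>+u. 2 * (ennreal (chi_squared_density d u) * std_normal_tail (\<delta> + sqrt u)) \<partial>lborel)"
  proof (rule nn_integral_mono_AE, rule eventually_mono[OF AE_lborel_singleton[of "\<delta>\<^sup>2"]])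
    fix u :: real
    assume "u \<noteq> \<delta>\<^sup>2"
    then have "ennreal (chi_squared_density d u)
        * (\<integral>\<^sup>+z\<in>{z. z\<^sup>2 / 4 \<ge> u \<and> u \<ge> \<delta>\<^sup>2}. ennreal (std_normal_density z) \<partial>lborel)
        \<le> ennreal (chi_squared_density d u) * (2 * std_normal_tail (\<delta> + sqrt u))"
      by (intro mult_left_mono std_normal_band_le_twice_tail[OF \<delta>]) auto
    then show "ennreal (chi_squared_density d u)
        * (\<integral>\<^sup>+z\<in>{z. z\<^sup>2 / 4 \<ge> u \<and> u \<ge> \<delta>\<^sup>2}. ennreal (std_normal_density z) \<partial>lborel)
        \<le> 2 * (ennreal (chi_squared_density d u) * std_normal_tail (\<delta> + sqrt u))"
      by (simp add: mult.left_commute)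
  qed
  also have "\<dots> = 2 * emeasure M {\<omega> \<in> space M. \<delta> + sqrt (U \<omega>) < Z \<omega>}"
    using emeasure_shifted_eq_nn_integral_tail[of \<delta> 1] by (simp add: nn_integral_cmult)
  finally have "ennreal (measure M {\<omega> \<in> space M. (Z \<omega>)\<^sup>2 / 4 \<ge> U \<omega> \<and> U \<omega> \<ge> \<delta>\<^sup>2})
      \<le> ennreal (2 * measure M {\<omega> \<in> space M. \<delta> + sqrt (U \<omega>) < Z \<omega>})"
    by (simp add: emeasure_eq_measure ennreal_mult)
  then show ?thesis by simp
qed

lemma measure_shifted_scale_ge:
  assumes c: "c \<ge> 0"
  shows "(1 + c\<^sup>2) powr (- real d / 2) * measure M {\<omega> \<in> space M. \<delta> + sqrt (U \<omega>) < Z \<omega>}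
         \<le> measure M {\<omega> \<in> space M. \<delta> + sqrt (U \<omega>) * c < Z \<omega>}"
proof -
  define s where "s = 1 / (1 + c\<^sup>2)"
  have s: "0 < s" "s \<le> 1" by (auto simp: s_def add_pos_nonneg)
  have s_powr: "s powr (real d / 2) = (1 + c\<^sup>2) powr (- real d / 2)"
    by (simp add: s_def powr_divide powr_minus_divide add_pos_nonneg)
  have "(sqrt s * c)\<^sup>2 \<le> 1\<^sup>2"
    using s by (simp add: power_mult_distrib s_def)
  then have sc: "sqrt s * c \<le> 1"
    by (rule power2_le_imp_le) simp
  let ?g = "\<lambda>u. ennreal (chi_squared_density d u) * std_normal_tail (\<delta> + sqrt u * c)"
  have "ennreal (s powr (real d / 2)) * emeasure M {\<omega> \<in> space M. \<delta> + sqrt (U \<omega>) < Z \<omega>}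
      = (\<integral>\<^sup>+v. ennreal (s powr (real d / 2))
           * (ennreal (chi_squared_density d v) * std_normal_tail (\<delta> + sqrt v)) \<partial>lborel)"
    using emeasure_shifted_eq_nn_integral_tail[of \<delta> 1] by (simp add: nn_integral_cmult)
  also have "\<dots> \<le> (\<integral>\<^sup>+v. ennreal s * ?g (s * v) \<partial>lborel)"
    by (intro nn_integral_mono chi_squared_density_mult_tail_scale_le s sc)
  also have "\<dots> = (\<integral>\<^sup>+u. ?g u \<partial>lborel)"
    using nn_integral_real_affine[of ?g s 0] s by (simp add: nn_integral_cmult)
  also have "\<dots> = emeasure M {\<omega> \<in> space M. \<delta> + sqrt (U \<omega>) * c < Z \<omega>}"
    by (rule emeasure_shifted_eq_nn_integral_tail[symmetric])
  finally show ?thesis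
    by (simp add: emeasure_eq_measure s_powr ennreal_mult[symmetric])
qed

lemma measure_shifted_le:
  assumes d: "d \<ge> 2" and \<delta>: "\<delta> > 0" and c: "c > 0"
  shows "measure M {\<omega> \<in> space M. \<delta> + sqrt (U \<omega>) * c < Z \<omega>}
         \<le> exp (- (1 + \<delta>\<^sup>2) / 2) / (2 * \<delta>\<^sup>2 * sqrt (real d) * c * (1 + c\<^sup>2) powr ((real d - 1) / 2))"
proof -
  define C where "C = exp (- \<delta>\<^sup>2 / 2) / (sqrt (2 * pi) * exp 1 * \<delta>\<^sup>2 * c)"
  define R where "R = (1 + c\<^sup>2) powr ((real d - 1) / 2)"
  define G where "G = Gamma ((real d - 1) / 2) / (sqrt 2 * Gamma (real d / 2) * R)"
  have C: "C > 0" using \<delta> c by (simp add: C_def)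
  have R: "R > 0" using add_pos_nonneg[of 1 "c\<^sup>2"] by (simp add: R_def)
  have G: "G > 0" using d R by (simp add: G_def)
  have "emeasure M {\<omega> \<in> space M. \<delta> + sqrt (U \<omega>) * c < Z \<omega>}
      \<le> (\<integral>\<^sup>+u. ennreal C
           * ennreal (chi_squared_density d u * (u powr (- 1/2) * exp (- (c\<^sup>2 * u / 2)))) \<partial>lborel)"
    unfolding emeasure_shifted_eq_nn_integral_tail C_def
    by (intro nn_integral_mono chi_squared_density_mult_tail_le \<delta> c)
  also have "\<dots> = ennreal C * ennreal G"
    using nn_integral_chi_squared_density_inv_sqrt_exp[OF d, of c]
    by (subst nn_integral_cmult) (auto simp: G_def R_def)
  finally have "measure M {\<omega> \<in> space M. \<delta> + sqrt (U \<omega>) * c < Z \<omega>} \<le> C * G"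
    using C G by (simp add: emeasure_eq_measure ennreal_mult[symmetric])
  also have "C * G = exp (- \<delta>\<^sup>2 / 2) / (2 * \<delta>\<^sup>2 * c * R)
      * (Gamma ((real d - 1) / 2) / (sqrt pi * exp 1 * Gamma (real d / 2)))"
    by (simp add: C_def G_def real_sqrt_mult field_simps)
  also have "\<dots> \<le> exp (- \<delta>\<^sup>2 / 2) / (2 * \<delta>\<^sup>2 * c * R) * (exp (1/2) / (exp 1 * sqrt (real d)))"
  proof (intro mult_left_mono)
    have "Gamma ((real d - 1) / 2) * sqrt (real d) \<le> sqrt pi * exp (1/2) * Gamma (real d / 2)"
      by (rule Gamma_half_pred_mult_sqrt_le[OF d])
    then show "Gamma ((real d - 1) / 2) / (sqrt pi * exp 1 * Gamma (real d / 2))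
        \<le> exp (1/2) / (exp 1 * sqrt (real d))"
      using d Gamma_real_pos[of "real d / 2"] by (simp add: field_simps)
  qed (use \<delta> c R in simp)
  also have "\<dots> = exp (- (1 + \<delta>\<^sup>2) / 2) / (2 * \<delta>\<^sup>2 * sqrt (real d) * c * R)"
  proof -
    have "exp (- \<delta>\<^sup>2 / 2) * exp (1/2) / exp 1 = exp (- (1 + \<delta>\<^sup>2) / 2)"
      by (simp flip: exp_add exp_diff)
    then show ?thesis by (simp add: field_simps)
  qed
  finally show ?thesis by (simp add: R_def)
qed

lemma measure_band_scaled_le:
  assumes \<delta>: "\<delta> > 0" and c: "c \<ge> 0"
  shows "1 / 2 * measure M {\<omega> \<in> space M. (Z \<omega>)\<^sup>2 / 4 \<ge> U \<omega> \<and> U \<omega> \<ge> \<delta>\<^sup>2} * (1 + c\<^sup>2) powr (- real d / 2)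
         \<le> measure M {\<omega> \<in> space M. \<delta> + sqrt (U \<omega>) * c < Z \<omega>}"
proof -
  have "1 / 2 * measure M {\<omega> \<in> space M. (Z \<omega>)\<^sup>2 / 4 \<ge> U \<omega> \<and> U \<omega> \<ge> \<delta>\<^sup>2}
      \<le> measure M {\<omega> \<in> space M. \<delta> + sqrt (U \<omega>) < Z \<omega>}"
    using measure_band_le[OF \<delta>] by simp
  then have "1 / 2 * measure M {\<omega> \<in> space M. (Z \<omega>)\<^sup>2 / 4 \<ge> U \<omega> \<and> U \<omega> \<ge> \<delta>\<^sup>2} * (1 + c\<^sup>2) powr (- real d / 2)
      \<le> measure M {\<omega> \<in> space M. \<delta> + sqrt (U \<omega>) < Z \<omega>} * (1 + c\<^sup>2) powr (- real d / 2)"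
    by (rule mult_right_mono) simp
  also have "\<dots> \<le> measure M {\<omega> \<in> space M. \<delta> + sqrt (U \<omega>) * c < Z \<omega>}"
    using measure_shifted_scale_ge[OF c] by (simp add: mult.commute)
  finally show ?thesis .
qed

lemma measure_shifted_powr_le:
  assumes d: "d \<ge> 2" and \<delta>: "\<delta> > 0" and p: "p > 0" and x: "x > 1"
  shows "measure M {\<omega> \<in> space M. \<delta> + sqrt (U \<omega>) * sqrt (x powr (2 / p) - 1) < Z \<omega>}
         \<le> exp (- (1 + \<delta>\<^sup>2) / 2) * p / (2 * \<delta>\<^sup>2 * sqrt (real d)) * (x powr ((1 - real d) / p) / ln x)"
proof -
  define c where "c = sqrt (x powr (2 / p) - 1)"
  have "x powr (2 / p) \<ge> 1" using x p by (intro ge_one_powr_ge_zero) auto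
  then have x_powr: "1 + c\<^sup>2 = x powr (2 / p)" by (simp add: c_def)
  have ln_x: "0 < ln x" "ln x \<le> p * c"
    using x p ln_le_mult_sqrt_powr_minus_one[of x p] by (auto simp: c_def)
  then have "0 < p * c" by linarith
  then have c: "c > 0" using p by (simp add: zero_less_mult_iff)
  define R where "R = (1 + c\<^sup>2) powr ((real d - 1) / 2)"
  have "2 / p * ((real d - 1) / 2) = (real d - 1) / p"
    using p by (simp add: field_simps)
  then have R: "R = x powr ((real d - 1) / p)"
    by (simp only: R_def x_powr powr_powr)
  have "R > 0" using x by (simp add: R)
  have "measure M {\<omega> \<in> space M. \<delta> + sqrt (U \<omega>) * c < Z \<omega>}
      \<le> exp (- (1 + \<delta>\<^sup>2) / 2) / (2 * \<delta>\<^sup>2 * sqrt (real d) * c * R)"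
    unfolding R_def by (rule measure_shifted_le[OF d \<delta> c])
  also have "\<dots> = exp (- (1 + \<delta>\<^sup>2) / 2) / (2 * \<delta>\<^sup>2 * sqrt (real d) * R) * (1 / c)"
    by simp
  also have "\<dots> \<le> exp (- (1 + \<delta>\<^sup>2) / 2) / (2 * \<delta>\<^sup>2 * sqrt (real d) * R) * (p / ln x)"
    using ln_x c \<open>R > 0\<close> \<delta> d by (intro mult_left_mono) (simp_all add: field_simps)
  also have "\<dots> = exp (- (1 + \<delta>\<^sup>2) / 2) * p / (2 * \<delta>\<^sup>2 * sqrt (real d)) * (x powr ((1 - real d) / p) / ln x)"
  proof -
    have "(1 - real d) / p = - ((real d - 1) / p)" by (metis minus_diff_eq minus_divide_left)
    then have "x powr ((1 - real d) / p) = 1 / R" by (simp add: R powr_minus_divide)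
    then show ?thesis by simp
  qed
  finally show ?thesis by (simp add: c_def)
qed

end

theorem proposition1:
  fixes M :: "'a measure" and Z U :: "'a \<Rightarrow> real" and d :: nat
    and \<delta> p :: real and k :: nat
  assumes "prob_space M"
    and "d \<ge> 2"
    and "distributed M lborel Z std_normal_density"
    and "distributed M lborel U (chi_squared_density d)"
    and "prob_space.indep_var M borel Z borel U"
    and "\<delta> > 0" and "p > 0" and "k \<ge> 1"
  shows "1 / 2 * measure M {\<omega> \<in> space M. (Z \<omega>)\<^sup>2 / 4 \<ge> U \<omega> \<and> U \<omega> \<ge> \<delta>\<^sup>2}
            * real k powr (- real d / p)
         \<le> measure M {\<omega> \<in> space M. \<delta> + sqrt (U \<omega>) * sqrt (real k powr (2 / p) - 1) < Z \<omega>}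
       \<and> (k \<ge> 2 \<longrightarrow>
          measure M {\<omega> \<in> space M. \<delta> + sqrt (U \<omega>) * sqrt (real k powr (2 / p) - 1) < Z \<omega>}
            \<le> exp (- (1 + \<delta>\<^sup>2) / 2) * p / (2 * \<delta>\<^sup>2 * sqrt (real d))
               * (real k powr ((1 - real d) / p) / ln (real k)))"
proof -
  interpret indep_normal_chi_squared M Z U d
    using assms(1,3-5) by (simp add: indep_normal_chi_squared_def indep_normal_chi_squared_axioms_def)
  define c where "c = sqrt (real k powr (2 / p) - 1)"
  have "real k powr (2 / p) \<ge> 1" using assms(7,8) by (intro ge_one_powr_ge_zero) auto
  then have c: "c \<ge> 0" and "1 + c\<^sup>2 = real k powr (2 / p)" by (simp_all add: c_def)
  then have "(1 + c\<^sup>2) powr (- real d / 2) = real k powr (- real d / p)"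
    by (simp add: powr_powr)
  then have "1 / 2 * measure M {\<omega> \<in> space M. (Z \<omega>)\<^sup>2 / 4 \<ge> U \<omega> \<and> U \<omega> \<ge> \<delta>\<^sup>2} * real k powr (- real d / p)
      \<le> measure M {\<omega> \<in> space M. \<delta> + sqrt (U \<omega>) * c < Z \<omega>}"
    using measure_band_scaled_le[OF assms(6) c] by simp
  moreover have "k \<ge> 2 \<Longrightarrow> real k > 1" by simp
  ultimately show ?thesis
    unfolding c_def using measure_shifted_powr_le[OF assms(2,6,7)] by blast
qed

end
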